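(* Consider the linearized equation $\mathbf{M}\ddot{\mathbf{x}}+\mathbf{G}\mathbf{x}=\mathbf{B}u$, $\mathbf{x}=[\delta x;\mathbf{x}_q]\in\mathbb{R}^{2n+2}$, $u\in\mathbb{R}^2$, of the chain pendulum on a cart about the equilibrium specified by $s=(s_1,\dots,s_n)\in\{1,-1\}^n$ and $x=0$, with the matrices defined in the context. Suppose that $\mathbf{M}$ is positive-definite. Then this linearized system is controllable if and only if the subsystem \[ \mathbf{M}_{qq}\ddot{\mathbf{x}}_q+\mathbf{G}_{qq}\mathbf{x}_q=\mathbf{M}_{qx}\mathbf{u} \] with control input $\mathbf{u}\in\mathbb{R}^2$ is controllable, or equivalently, if and only if \[ \mathrm{rank}\big[\lambda^2\mathbf{M}_{qq}+\mathbf{G}_{qq},\ \mathbf{M}_{qx}\big]=2n\quad\text{for every }\lambda\in\mathbb{C}. \]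
   Context: Let $n\ge1$, $e_1,e_2,e_3$ the standard basis of $\mathbb{R}^3$ ($e_3$ the direction of gravity), $g>0$, $C=[e_1,e_2]\in\mathbb{R}^{3\times2}$, and $\hat y$ the skew-symmetric matrix with $\hat yz=y\times z$. The system is a cart of mass $m>0$ with planar position $x\in\mathbb{R}^2$, driven by a horizontal force $u\in\mathbb{R}^2$, carrying a serial chain of $n$ links with spherical joints; link $i$ has length $l_i>0$, unit direction $q_i\in\mathsf{S}^2\subset\mathbb{R}^3$, and point mass $m_i>0$ at its outboard end. Define $M_{00}=m+\sum_{i=1}^n m_i$, $M_{0i}=\big(\sum_{a=i}^n m_a\big)l_iC^T\in\mathbb{R}^{2\times3}$, $M_{ij}=\big(\sum_{a=\max\{i,j\}}^n m_a\big)l_il_j$. An equilibrium is given by $q_i=s_ie_3$ with $s_i\in\{1,-1\}$, zero velocities, and $x=0$. Its linearization (with perturbations $x=\epsilon\delta x$, $q_i=\exp(\epsilon\hat\xi_i)s_ie_3$, $\xi_i\cdot e_3=0$, $\mathbf{x}_q=[C^T\xi_1;\dots;C^T\xi_n]\in\mathbb{R}^{2n}$) is $\mathbf{M}\ddot{\mathbf{x}}+\mathbf{G}\mathbf{x}=\mathbf{B}u$ with $\mathbf{M}=\begin{bmatrix}\mathbf{M}_{xx}&\mathbf{M}_{xq}\\\mathbf{M}_{qx}&\mathbf{M}_{qq}\end{bmatrix}$, $\mathbf{G}=\begin{bmatrix}0_2&0\\0&\mathbf{G}_{qq}\end{bmatrix}$, $\mathbf{B}=\begin{bmatrix}I_2\\0_{2n\times2}\end{bmatrix}$,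 where $\mathbf{M}_{xx}=M_{00}I_2$, $\mathbf{M}_{xq}=[-s_1M_{01}\hat e_3C,\dots,-s_nM_{0n}\hat e_3C]\in\mathbb{R}^{2\times2n}$, $\mathbf{M}_{qx}=\mathbf{M}_{xq}^T$, $\mathbf{M}_{qq}$ is the $2n\times2n$ block matrix with $(i,j)$ block $s_is_jM_{ij}I_2$, and $\mathbf{G}_{qq}=\mathrm{diag}\big[s_i\big(\sum_{a=i}^n m_a\big)g\,l_iI_2\big]_{i=1}^n$. Controllability refers to the standard notion for the linear system in first-order form with state $(\mathbf{x},\dot{\mathbf{x}})$. *)

theory Defs
  imports "Jordan_Normal_Form.DL_Rank"
begin

definition mrank :: "'a::field mat \<Rightarrow> nat" where
  "mrank A = vec_space.rank (dim_row A) A"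

definition hcat :: "'a::zero mat \<Rightarrow> 'a mat \<Rightarrow> 'a mat" where
  "hcat A B = mat (dim_row A) (dim_col A + dim_col B)
     (\<lambda>(i,j). if j < dim_col A then A $$ (i,j) else B $$ (i, j - dim_col A))"

definition vcat :: "'a::zero mat \<Rightarrow> 'a mat \<Rightarrow> 'a mat" where
  "vcat A B = mat (dim_row A + dim_row B) (dim_col A)
     (\<lambda>(i,j). if i < dim_row A then A $$ (i,j) else B $$ (i - dim_row A, j))"

definition ctrb_mat :: "'a::field mat \<Rightarrow> 'a mat \<Rightarrow> 'a mat" where
  "ctrb_mat A B = (let N = dim_row A; p = dim_col B in
     mat N (N * p) (\<lambda>(i,j). ((A ^\<^sub>m (j div p)) * B) $$ (i, j mod p)))"

definition controllable :: "'a::field mat \<Rightarrow> 'a mat \<Rightarrow> bool" where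
  "controllable A B \<longleftrightarrow> mrank (ctrb_mat A B) = dim_row A"

definition minv :: "'a::field mat \<Rightarrow> 'a mat" where
  "minv A = (SOME X. X \<in> carrier_mat (dim_row A) (dim_row A) \<and>
                     A * X = 1\<^sub>m (dim_row A) \<and> X * A = 1\<^sub>m (dim_row A))"

text \<open>Second-order system  Mm x'' + Gm x = Bm u,  put into first-order form with
  state (x, x'):  A = [0, I; -Mm^-1 Gm, 0],  B = [0; Mm^-1 Bm].\<close>
definition so_controllable :: "real mat \<Rightarrow> real mat \<Rightarrow> real mat \<Rightarrow> bool" where
  "so_controllable Mm Gm Bm = (let N = dim_row Mm in
     controllable
       (four_block_mat (0\<^sub>m N N) (1\<^sub>m N) (- (minv Mm * Gm)) (0\<^sub>m N N))
       (vcat (0\<^sub>m N (dim_col Bm)) (minv Mm * Bm)))"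

definition pos_def :: "real mat \<Rightarrow> bool" where
  "pos_def A \<longleftrightarrow> A \<in> carrier_mat (dim_row A) (dim_row A) \<and> transpose_mat A = A \<and>
     (\<forall>v \<in> carrier_vec (dim_row A). v \<noteq> 0\<^sub>v (dim_row A) \<longrightarrow> v \<bullet> (A *\<^sub>v v) > 0)"

text \<open>Skew matrix hat y (hat y z = y \<times> z), basis vector e3 and C = [e1, e2].\<close>
definition hat :: "real vec \<Rightarrow> real mat" where
  "hat y = mat_of_rows_list 3 [[0, - y $ 2, y $ 1], [y $ 2, 0, - y $ 0], [- y $ 1, y $ 0, 0]]"

definition e3 :: "real vec" where "e3 = unit_vec 3 2"

definition Cmat :: "real mat" where
  "Cmat = mat 3 2 (\<lambda>(i,j). if i = j then 1 else 0)"

text \<open>Masses mm 1..mm n, lengths l 1..l n, signs s 1..s n, cart mass m.\<close>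
definition msum :: "nat \<Rightarrow> (nat \<Rightarrow> real) \<Rightarrow> nat \<Rightarrow> real" where
  "msum n mm i = (\<Sum>a = i..n. mm a)"

definition M00 :: "nat \<Rightarrow> real \<Rightarrow> (nat \<Rightarrow> real) \<Rightarrow> real" where
  "M00 n m mm = m + (\<Sum>i = 1..n. mm i)"

definition M0 :: "nat \<Rightarrow> (nat \<Rightarrow> real) \<Rightarrow> (nat \<Rightarrow> real) \<Rightarrow> nat \<Rightarrow> real mat" where
  "M0 n mm l i = (msum n mm i * l i) \<cdot>\<^sub>m transpose_mat Cmat"

definition Mij :: "nat \<Rightarrow> (nat \<Rightarrow> real) \<Rightarrow> (nat \<Rightarrow> real) \<Rightarrow> nat \<Rightarrow> nat \<Rightarrow> real" where
  "Mij n mm l i j = msum n mm (max i j) * l i * l j"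

text \<open>Coordinates of x_q: link i (1-based) occupies the indices 2(i-1), 2(i-1)+1.\<close>
definition Mxx :: "nat \<Rightarrow> real \<Rightarrow> (nat \<Rightarrow> real) \<Rightarrow> real mat" where
  "Mxx n m mm = M00 n m mm \<cdot>\<^sub>m 1\<^sub>m 2"

definition Mxq_blk :: "nat \<Rightarrow> (nat \<Rightarrow> real) \<Rightarrow> (nat \<Rightarrow> real) \<Rightarrow> (nat \<Rightarrow> real) \<Rightarrow> nat \<Rightarrow> real mat" where
  "Mxq_blk n mm l s i = (- s i) \<cdot>\<^sub>m (M0 n mm l i * hat e3 * Cmat)"

definition Mxq :: "nat \<Rightarrow> (nat \<Rightarrow> real) \<Rightarrow> (nat \<Rightarrow> real) \<Rightarrow> (nat \<Rightarrow> real) \<Rightarrow> real mat" where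
  "Mxq n mm l s = mat 2 (2 * n) (\<lambda>(r,k). Mxq_blk n mm l s (k div 2 + 1) $$ (r, k mod 2))"

definition Mqx :: "nat \<Rightarrow> (nat \<Rightarrow> real) \<Rightarrow> (nat \<Rightarrow> real) \<Rightarrow> (nat \<Rightarrow> real) \<Rightarrow> real mat" where
  "Mqx n mm l s = transpose_mat (Mxq n mm l s)"

definition Mqq :: "nat \<Rightarrow> (nat \<Rightarrow> real) \<Rightarrow> (nat \<Rightarrow> real) \<Rightarrow> (nat \<Rightarrow> real) \<Rightarrow> real mat" where
  "Mqq n mm l s = mat (2 * n) (2 * n) (\<lambda>(r,c).
     s (r div 2 + 1) * s (c div 2 + 1) * Mij n mm l (r div 2 + 1) (c div 2 + 1) *
     (if r mod 2 = c mod 2 then 1 else 0))"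

definition Gqq :: "nat \<Rightarrow> (nat \<Rightarrow> real) \<Rightarrow> (nat \<Rightarrow> real) \<Rightarrow> (nat \<Rightarrow> real) \<Rightarrow> real \<Rightarrow> real mat" where
  "Gqq n mm l s g = mat (2 * n) (2 * n) (\<lambda>(r,c).
     if r = c then s (r div 2 + 1) * msum n mm (r div 2 + 1) * g * l (r div 2 + 1) else 0)"

definition Mlin :: "nat \<Rightarrow> real \<Rightarrow> (nat \<Rightarrow> real) \<Rightarrow> (nat \<Rightarrow> real) \<Rightarrow> (nat \<Rightarrow> real) \<Rightarrow> real mat" where
  "Mlin n m mm l s = four_block_mat (Mxx n m mm) (Mxq n mm l s) (Mqx n mm l s) (Mqq n mm l s)"

definition Glin :: "nat \<Rightarrow> (nat \<Rightarrow> real) \<Rightarrow> (nat \<Rightarrow> real) \<Rightarrow> (nat \<Rightarrow> real) \<Rightarrow> real \<Rightarrow> real mat" where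
  "Glin n mm l s g = four_block_mat (0\<^sub>m 2 2) (0\<^sub>m 2 (2 * n)) (0\<^sub>m (2 * n) 2) (Gqq n mm l s g)"

definition Blin :: "nat \<Rightarrow> real mat" where
  "Blin n = vcat (1\<^sub>m 2) (0\<^sub>m (2 * n) 2)"

end

theory Submission
  imports Defs "Jordan_Normal_Form.Spectral_Radius"
begin

text \<open>Controllability of the first-order form is the Kalman rank condition. Dually, it fails iff
  some nonzero w satisfies B^T (A^T)^k w = 0 for all k; after complexification (harmless for real
  matrices) the Krylov space of such a w is A^T-invariant and so contains an eigenvector of A^T
  (Hautus test). For A = [0, I; -M^-1 G, 0] the eigenvectors of A^T are the vectors (\<mu> w, w) with
  (M^-1 G)^T w = -\<mu>^2 w, and y = M^-T w turns them into nonzero solutions of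
  (\<mu>^2 M + G)^T y = 0, B^T y = 0, i.e. into rank drops of [\<mu>^2 M + G, B].
  For the cart, B^T y is the cart part of y, so y = (0, y_q); as G_qq is invertible, \<mu> \<noteq> 0, and
  the condition becomes the rank drop of [\<mu>^2 M_qq + G_qq, M_qx], which by the same argument is
  the failure of controllability of the subsystem driven through M_qx.\<close>

lemma pow_mat_Suc_left:
  assumes A: "A \<in> carrier_mat n n"
  shows "A ^\<^sub>m Suc k = A * A ^\<^sub>m k"
proof (induction k)
  case (Suc k)
  have "A ^\<^sub>m Suc (Suc k) = (A * A ^\<^sub>m k) * A" using Suc by simp
  also have "\<dots> = A * (A ^\<^sub>m k * A)" using A by (simp add: assoc_mult_mat[of _ n n _ n _ n])
  finally show ?case by simp
qed (use A in simp)

lemma transpose_pow_mat: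
  fixes A :: "'a::comm_ring_1 mat"
  assumes A: "A \<in> carrier_mat n n"
  shows "(A ^\<^sub>m k)\<^sup>T = A\<^sup>T ^\<^sub>m k"
proof (induction k)
  case (Suc k)
  have "(A ^\<^sub>m Suc k)\<^sup>T = A\<^sup>T * (A ^\<^sub>m k)\<^sup>T"
    using A by (simp add: transpose_mult[OF pow_carrier_mat[OF A] A])
  then show ?case using Suc pow_mat_Suc_left[of "A\<^sup>T" n k] A by simp
qed (use A in simp)

lemma transpose_smult_mat: "(a \<cdot>\<^sub>m A)\<^sup>T = a \<cdot>\<^sub>m A\<^sup>T"
  by (rule eq_matI) auto

lemma smult_mat_mult_vec: "dim_vec v = dim_col A \<Longrightarrow> (a \<cdot>\<^sub>m A) *\<^sub>v v = a \<cdot>\<^sub>v (A *\<^sub>v v)"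
  by (rule eq_vecI) (auto simp: scalar_prod_def sum_distrib_left ac_simps)

lemma smult_append_vec: "a \<cdot>\<^sub>v (v @\<^sub>v w) = (a \<cdot>\<^sub>v v) @\<^sub>v (a \<cdot>\<^sub>v w)"
  by (rule eq_vecI) auto

lemma zero_mat_mult_vec [simp]: "v \<in> carrier_vec n \<Longrightarrow> 0\<^sub>m r n *\<^sub>v v = 0\<^sub>v r"
  by (auto simp: vec_eq_iff scalar_prod_def)

lemma mult_mat_vec_zero [simp]: "A \<in> carrier_mat r n \<Longrightarrow> A *\<^sub>v 0\<^sub>v n = 0\<^sub>v r"
  by (auto simp: vec_eq_iff)

lemma map_mat_of_real_zero_mat: "map_mat of_real (0\<^sub>m r k) = 0\<^sub>m r k"
  by (rule eq_matI) auto

lemma vcat_carrier: "X \<in> carrier_mat n1 p \<Longrightarrow> Y \<in> carrier_mat n2 p \<Longrightarrow> vcat X Y \<in> carrier_mat (n1 + n2) p"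
  unfolding vcat_def by simp

lemma map_vcat: "dim_col Y = dim_col X \<Longrightarrow> map_mat f (vcat X Y) = vcat (map_mat f X) (map_mat f Y)"
  unfolding vcat_def by (rule eq_matI) auto

lemma transpose_vcat_mult_append:
  assumes X: "X \<in> carrier_mat n1 p" and Y: "Y \<in> carrier_mat n2 p"
    and w1: "w1 \<in> carrier_vec n1" and w2: "w2 \<in> carrier_vec n2"
  shows "(vcat X Y)\<^sup>T *\<^sub>v (w1 @\<^sub>v w2) = X\<^sup>T *\<^sub>v w1 + Y\<^sup>T *\<^sub>v w2"
proof (rule eq_vecI)
  fix j assume "j < dim_vec (X\<^sup>T *\<^sub>v w1 + Y\<^sup>T *\<^sub>v w2)"
  then have j: "j < p" using X Y by simp
  have "col (vcat X Y) j = col X j @\<^sub>v col Y j"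
    using X Y j unfolding vcat_def by (intro eq_vecI) auto
  then have "((vcat X Y)\<^sup>T *\<^sub>v (w1 @\<^sub>v w2)) $ j = col X j \<bullet> w1 + col Y j \<bullet> w2"
    using j X Y w1 w2 by (simp add: vcat_def scalar_prod_append[of _ n1 _ n2])
  then show "((vcat X Y)\<^sup>T *\<^sub>v (w1 @\<^sub>v w2)) $ j = (X\<^sup>T *\<^sub>v w1 + Y\<^sup>T *\<^sub>v w2) $ j"
    using j X Y by simp
qed (use X Y in \<open>simp add: vcat_def\<close>)

lemma cols_hcat: "dim_row Y = dim_row X \<Longrightarrow> cols (hcat X Y) = cols X @ cols Y"
  by (rule nth_equalityI) (auto simp: hcat_def cols_def nth_append vec_eq_iff)

lemma transpose_mult_vec_eq_0_iff:
  fixes X :: "'a::field mat"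
  assumes X: "X \<in> carrier_mat N c" and w: "w \<in> carrier_vec N"
  shows "X\<^sup>T *\<^sub>v w = 0\<^sub>v c \<longleftrightarrow> (\<forall>v \<in> set (cols X). w \<bullet> v = 0)"
proof -
  have "X\<^sup>T *\<^sub>v w = 0\<^sub>v c \<longleftrightarrow> (\<forall>j<c. col X j \<bullet> w = 0)"
    using X by (auto simp: vec_eq_iff)
  also have "\<dots> \<longleftrightarrow> (\<forall>v \<in> set (cols X). w \<bullet> v = 0)"
    using X w comm_scalar_prod[OF w] col_dim by (auto simp: cols_def)
  finally show ?thesis .
qed

lemma transpose_hcat_mult_vec_eq_0_iff:
  fixes X Y :: "'a::field mat"
  assumes X: "X \<in> carrier_mat N c1" and Y: "Y \<in> carrier_mat N c2" and w: "w \<in> carrier_vec N"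
  shows "(hcat X Y)\<^sup>T *\<^sub>v w = 0\<^sub>v (c1 + c2) \<longleftrightarrow> X\<^sup>T *\<^sub>v w = 0\<^sub>v c1 \<and> Y\<^sup>T *\<^sub>v w = 0\<^sub>v c2"
proof -
  have "hcat X Y \<in> carrier_mat N (c1 + c2)" using X Y by (simp add: hcat_def)
  then show ?thesis
    using X Y w by (auto simp: transpose_mult_vec_eq_0_iff cols_hcat)
qed

lemma transpose_four_block_mult_zero_append:
  assumes A: "A \<in> carrier_mat k k" and B: "B \<in> carrier_mat k q" and C: "C \<in> carrier_mat q k"
    and D: "D \<in> carrier_mat q q" and y: "y \<in> carrier_vec q"
  shows "(four_block_mat A B C D)\<^sup>T *\<^sub>v (0\<^sub>v k @\<^sub>v y) = (C\<^sup>T *\<^sub>v y) @\<^sub>v (D\<^sup>T *\<^sub>v y)"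
  using A B C D y
  by (subst transpose_four_block_mat[OF A B C D], subst four_block_mat_mult_vec) auto

lemma minv_inverse:
  fixes A :: "'a::field mat"
  assumes A: "A \<in> carrier_mat n n" and inj: "\<forall>v \<in> carrier_vec n. A *\<^sub>v v = 0\<^sub>v n \<longrightarrow> v = 0\<^sub>v n"
  shows "minv A \<in> carrier_mat n n" "A * minv A = 1\<^sub>m n" "minv A * A = 1\<^sub>m n"
proof -
  have "det A \<noteq> 0" using det_0_iff_vec_prod_zero_field[OF A] inj by auto
  then have "\<exists>X. X \<in> carrier_mat n n \<and> A * X = 1\<^sub>m n \<and> X * A = 1\<^sub>m n"
    using det_non_zero_imp_unit[OF A] unfolding Units_def ring_mat_def by auto
  from someI_ex[OF this] show "minv A \<in> carrier_mat n n" "A * minv A = 1\<^sub>m n" "minv A * A = 1\<^sub>m n"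
    unfolding minv_def using A by auto
qed

definition left_kernel_trivial :: "'a::field mat \<Rightarrow> bool" where
  "left_kernel_trivial X \<longleftrightarrow>
     (\<forall>w \<in> carrier_vec (dim_row X). X\<^sup>T *\<^sub>v w = 0\<^sub>v (dim_col X) \<longrightarrow> w = 0\<^sub>v (dim_row X))"

lemma wide_mat_kernel_nontrivial:
  fixes F :: "'a::field mat"
  assumes F: "F \<in> carrier_mat N K" and NK: "N < K"
  obtains c where "c \<in> carrier_vec K" "c \<noteq> 0\<^sub>v K" "F *\<^sub>v c = 0\<^sub>v N"
proof -
  \<comment> \<open>Pad F with zero rows to a square matrix Z, which is singular and has the same kernel.\<close>
  define r where "r = (\<lambda>i. if i < N then vec K (\<lambda>j. F $$ (i,j)) else 0\<^sub>v K)"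
  define Z where "Z = mat\<^sub>r K K (\<lambda>i. if i = K - 1 then 0\<^sub>v K else r i)"
  have "det Z = 0" unfolding Z_def by (rule det_row_0) (use NK in \<open>auto simp: r_def\<close>)
  then obtain c where c: "c \<in> carrier_vec K" "c \<noteq> 0\<^sub>v K" "Z *\<^sub>v c = 0\<^sub>v K"
    using det_0_iff_vec_prod_zero_field[of Z K] by (auto simp: Z_def)
  have "F *\<^sub>v c = 0\<^sub>v N"
  proof (rule eq_vecI)
    fix i assume "i < dim_vec (0\<^sub>v N :: 'a vec)"
    then have i: "i < N" by simp
    have "(F *\<^sub>v c) $ i = (Z *\<^sub>v c) $ i"
      using i NK F c(1) by (simp add: Z_def r_def mult_mat_vec_def scalar_prod_def row_def)
    then show "(F *\<^sub>v c) $ i = 0\<^sub>v N $ i" using c(3) i NK by simp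
  qed (use F in simp)
  with c show thesis using that by blast
qed

lemma few_vecs_obtain_nonzero_orthogonal:
  fixes U :: "'a::field vec set"
  assumes U: "finite U" "U \<subseteq> carrier_vec N" and lt: "card U < N"
  obtains w where "w \<in> carrier_vec N" "w \<noteq> 0\<^sub>v N" "\<forall>u \<in> U. w \<bullet> u = 0"
proof -
  obtain us where us: "set us = U" "distinct us" using finite_distinct_list[OF U(1)] by blast
  define F where "F = mat (card U) N (\<lambda>(i,j). (us ! i) $ j)"
  have "F \<in> carrier_mat (card U) N" unfolding F_def by simp
  then obtain w where w: "w \<in> carrier_vec N" "w \<noteq> 0\<^sub>v N" "F *\<^sub>v w = 0\<^sub>v (card U)"
    using wide_mat_kernel_nontrivial lt by blast
  have "w \<bullet> u = 0" if u: "u \<in> U" for u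
  proof -
    obtain i where i: "i < card U" "us ! i = u"
      using u us distinct_card by (metis in_set_conv_nth)
    have uc: "u \<in> carrier_vec N" using u U(2) by auto
    have "(F *\<^sub>v w) $ i = u \<bullet> w" using i uc w(1) by (simp add: F_def scalar_prod_def row_def)
    then show ?thesis using w(3) i comm_scalar_prod[OF uc w(1)] by simp
  qed
  then show thesis using that w(1,2) by blast
qed

lemma (in vec_space) maximal_lin_indpt_spans:
  assumes S: "S \<subseteq> carrier_vec n" and U: "maximal U (\<lambda>T. T \<subseteq> S \<and> lin_indpt T)"
  shows "S \<subseteq> span U"
proof
  have US: "U \<subseteq> S" and Uli: "lin_indpt U" using U unfolding maximal_def by auto
  have UC: "U \<subseteq> carrier_vec n" using US S by auto
  fix s assume s: "s \<in> S"
  show "s \<in> span U"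
  proof (rule ccontr)
    assume ns: "s \<notin> span U"
    then have "s \<notin> U" using in_own_span[OF UC] by auto
    moreover have "lin_indpt (U \<union> {s})"
      using lin_dep_iff_in_span[OF UC Uli] ns s S \<open>s \<notin> U\<close> by auto
    then have "U \<union> {s} = U" using U US s unfolding maximal_def by blast
    ultimately show False by auto
  qed
qed

lemma mrank_eq_dim_row_iff:
  fixes X :: "'a::field mat"
  assumes X: "X \<in> carrier_mat N c"
  shows "mrank X = N \<longleftrightarrow> left_kernel_trivial X"
proof -
  interpret vec_space "TYPE('a)" N .
  define S where "S = set (cols X)"
  have SC: "S \<subseteq> carrier_vec N" unfolding S_def using X cols_dim by blast
  have "lin_indpt {}" by (simp add: lin_dep_def)
  then obtain U where U: "finite U" "maximal U (\<lambda>T. T \<subseteq> S \<and> lin_indpt T)"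
    using maximal_exists_superset[of S "\<lambda>T. T \<subseteq> S \<and> lin_indpt T" "{}"] unfolding S_def by blast
  have US: "U \<subseteq> S" and Uli: "lin_indpt U" using U(2) unfolding maximal_def by auto
  have UC: "U \<subseteq> carrier_vec N" using US SC by auto
  have rank: "mrank X = card U" using X U(2) rank_card_indpt[OF X] by (simp add: mrank_def S_def)
  have orth: "left_kernel_trivial X \<longleftrightarrow>
      (\<forall>w \<in> carrier_vec N. (\<forall>v \<in> S. w \<bullet> v = 0) \<longrightarrow> w = 0\<^sub>v N)"
    using X transpose_mult_vec_eq_0_iff[OF X] by (auto simp: left_kernel_trivial_def S_def)
  show ?thesis
  proof
    assume "mrank X = N"
    then have "basis U" using dim_li_is_basis[OF fin_dim U(1) UC Uli] rank dim_is_n by simp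
    then have spanU: "span U = carrier_vec N" unfolding basis_def by simp
    show "left_kernel_trivial X" unfolding orth
    proof (intro ballI impI)
      fix w :: "'a vec" assume w: "w \<in> carrier_vec N" and "\<forall>v \<in> S. w \<bullet> v = 0"
      then have "w \<in> orthogonal_complement U"
        using US unfolding orthogonal_complement_def by auto
      then have "w \<in> orthogonal_complement (span U)" using UC by simp
      then have unit: "w \<bullet> unit_vec N i = 0" for i
        using spanU unfolding orthogonal_complement_def by simp
      have "w $ i = 0" if "i < N" for i using unit[of i] that w by simp
      then show "w = 0\<^sub>v N" using w by (intro eq_vecI) auto
    qed
  next
    assume lk: "left_kernel_trivial X"
    show "mrank X = N"
    proof (rule ccontr)
      assume "mrank X \<noteq> N"
      then have lt: "card U < N" using li_le_dim(2)[OF fin_dim _ Uli] UC dim_is_n rank by simp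
      obtain w where w: "w \<in> carrier_vec N" "w \<noteq> 0\<^sub>v N" "\<forall>u \<in> U. w \<bullet> u = 0"
        by (rule few_vecs_obtain_nonzero_orthogonal[OF U(1) UC lt])
      then have "w \<in> orthogonal_complement U"
        unfolding orthogonal_complement_def by auto
      then have "w \<in> orthogonal_complement (span U)" using UC by simp
      then have "\<forall>v \<in> S. w \<bullet> v = 0"
        using maximal_lin_indpt_spans[OF SC U(2)] unfolding orthogonal_complement_def by auto
      then show False using lk w unfolding orth by blast
    qed
  qed
qed

definition has_unobservable_vec :: "'a::field mat \<Rightarrow> 'a mat \<Rightarrow> bool" where
  "has_unobservable_vec A C \<longleftrightarrow> (\<exists>w \<in> carrier_vec (dim_row A). w \<noteq> 0\<^sub>v (dim_row A) \<and>
      (\<forall>k < dim_row A. C *\<^sub>v (A ^\<^sub>m k *\<^sub>v w) = 0\<^sub>v (dim_row C)))"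

lemma all_less_mult_iff_div_mod:
  fixes N p :: nat
  shows "(\<forall>j < N * p. P (j div p) (j mod p)) \<longleftrightarrow> (\<forall>k < N. \<forall>i < p. P k i)"
proof
  assume *: "\<forall>j < N * p. P (j div p) (j mod p)"
  show "\<forall>k < N. \<forall>i < p. P k i"
  proof (intro allI impI)
    fix k i assume "k < N" "i < p"
    then have "k * p + i < N * p"
      by (metis add_less_cancel_left less_le_trans mult_Suc add.commute mult.commute
          mult_le_mono2 Suc_leI)
    then show "P k i" using *[rule_format, of "k * p + i"] \<open>i < p\<close> by simp
  qed
next
  assume "\<forall>k < N. \<forall>i < p. P k i"
  then show "\<forall>j < N * p. P (j div p) (j mod p)"
    by (metis div_less_iff_less_mult mod_less_divisor mult_eq_0_iff not_gr0 not_less_zero)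
qed

lemma transpose_ctrb_mat_mult_vec:
  fixes A :: "'a::field mat"
  assumes A: "A \<in> carrier_mat N N" and B: "B \<in> carrier_mat N p"
    and w: "w \<in> carrier_vec N" and j: "j < N * p"
  shows "((ctrb_mat A B)\<^sup>T *\<^sub>v w) $ j = (B\<^sup>T *\<^sub>v (A\<^sup>T ^\<^sub>m (j div p) *\<^sub>v w)) $ (j mod p)"
proof -
  have jm: "j mod p < p" using j by (cases p) auto
  let ?k = "j div p"
  have "((ctrb_mat A B)\<^sup>T *\<^sub>v w) $ j = col (ctrb_mat A B) j \<bullet> w"
    using A B j by (simp add: ctrb_mat_def)
  also have "col (ctrb_mat A B) j = col (A ^\<^sub>m ?k * B) (j mod p)"
    using A B j jm by (auto simp: ctrb_mat_def vec_eq_iff)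
  also have "\<dots> \<bullet> w = ((A ^\<^sub>m ?k * B)\<^sup>T *\<^sub>v w) $ (j mod p)"
    using A B jm by simp
  also have "(A ^\<^sub>m ?k * B)\<^sup>T = B\<^sup>T * A\<^sup>T ^\<^sub>m ?k"
    using transpose_mult[OF pow_carrier_mat[OF A] B] transpose_pow_mat[OF A] by simp
  also have "\<dots> *\<^sub>v w = B\<^sup>T *\<^sub>v (A\<^sup>T ^\<^sub>m ?k *\<^sub>v w)"
    using A B w by (simp add: assoc_mult_mat_vec[of _ p N _ N])
  finally show ?thesis .
qed

lemma controllable_iff_no_unobservable_vec:
  fixes A :: "'a::field mat"
  assumes A: "A \<in> carrier_mat N N" and B: "B \<in> carrier_mat N p"
  shows "controllable A B \<longleftrightarrow> \<not> has_unobservable_vec A\<^sup>T B\<^sup>T"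
proof -
  have X: "ctrb_mat A B \<in> carrier_mat N (N * p)" using A B by (simp add: ctrb_mat_def)
  have kernel: "(ctrb_mat A B)\<^sup>T *\<^sub>v w = 0\<^sub>v (N * p) \<longleftrightarrow>
      (\<forall>k<N. B\<^sup>T *\<^sub>v (A\<^sup>T ^\<^sub>m k *\<^sub>v w) = 0\<^sub>v p)" if w: "w \<in> carrier_vec N" for w
    using A B w X transpose_ctrb_mat_mult_vec[OF A B w]
      all_less_mult_iff_div_mod[of N p "\<lambda>k i. (B\<^sup>T *\<^sub>v (A\<^sup>T ^\<^sub>m k *\<^sub>v w)) $ i = 0"]
    by (auto simp: vec_eq_iff)
  have "controllable A B \<longleftrightarrow> left_kernel_trivial (ctrb_mat A B)"
    using mrank_eq_dim_row_iff[OF X] A by (simp add: controllable_def)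
  then show ?thesis
    using A B X kernel by (auto simp: left_kernel_trivial_def has_unobservable_vec_def)
qed

definition krylov_mat :: "'a::comm_ring_1 mat \<Rightarrow> 'a vec \<Rightarrow> nat \<Rightarrow> 'a mat" where
  "krylov_mat A w k = mat (dim_row A) k (\<lambda>(i,j). (A ^\<^sub>m j *\<^sub>v w) $ i)"

definition has_unobservable_eigvec :: "'a::field mat \<Rightarrow> 'a mat \<Rightarrow> bool" where
  "has_unobservable_eigvec A C \<longleftrightarrow> (\<exists>\<mu> u. eigenvector A u \<mu> \<and> C *\<^sub>v u = 0\<^sub>v (dim_row C))"

lemma col_krylov_mat:
  assumes "A \<in> carrier_mat N N" and "w \<in> carrier_vec N" and "j < k"
  shows "col (krylov_mat A w k) j = A ^\<^sub>m j *\<^sub>v w"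
  using assms by (auto simp: krylov_mat_def vec_eq_iff)

lemma nonzero_kernel_obtain_col_comb_previous:
  fixes v :: "nat \<Rightarrow> 'a::field vec"
  assumes v: "\<And>j. v j \<in> carrier_vec N"
    and y: "y \<in> carrier_vec k" "y \<noteq> 0\<^sub>v k" "mat N k (\<lambda>(i,j). v j $ i) *\<^sub>v y = 0\<^sub>v N"
  obtains K a where "K < k" "a \<in> carrier_vec K" "v K = mat N K (\<lambda>(i,j). v j $ i) *\<^sub>v a"
proof -
  define J where "J = {j. j < k \<and> y $ j \<noteq> 0}"
  have "J \<noteq> {}" using y unfolding J_def by (auto simp: vec_eq_iff)
  moreover have fJ: "finite J" unfolding J_def by simp
  ultimately have "Max J \<in> J" by simp
  define K where "K = Max J"
  have Kk: "K < k" and yK: "y $ K \<noteq> 0" using \<open>Max J \<in> J\<close> unfolding K_def J_def by auto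
  have yz: "y $ j = 0" if "K < j" "j < k" for j
  proof (rule ccontr)
    assume "y $ j \<noteq> 0"
    then have "j \<le> K" using that Max_ge[OF fJ, of j] by (simp add: K_def J_def)
    then show False using that by simp
  qed
  define a where "a = vec K (\<lambda>j. - y $ j / y $ K)"
  have "v K = mat N K (\<lambda>(i,j). v j $ i) *\<^sub>v a"
  proof (rule eq_vecI)
    fix i assume "i < dim_vec (mat N K (\<lambda>(i,j). v j $ i) *\<^sub>v a)"
    then have i: "i < N" by simp
    have "0 = (\<Sum>j<k. v j $ i * y $ j)"
      using y i by (auto simp: vec_eq_iff scalar_prod_def lessThan_atLeast0 mult.commute)
    also have "\<dots> = (\<Sum>j<Suc K. v j $ i * y $ j)"
      by (rule sum.mono_neutral_right) (use Kk yz in auto)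
    finally have eq: "v K $ i * y $ K = - (\<Sum>j<K. v j $ i * y $ j)"
      by (simp add: eq_neg_iff_add_eq_0 add.commute)
    have "(mat N K (\<lambda>(i,j). v j $ i) *\<^sub>v a) $ i = (\<Sum>j<K. v j $ i * (- y $ j / y $ K))"
      using i by (simp add: a_def scalar_prod_def lessThan_atLeast0 mult.commute)
    also have "\<dots> = - (\<Sum>j<K. v j $ i * y $ j) / y $ K"
      by (simp add: sum_divide_distrib sum_negf)
    also have "\<dots> = v K $ i" using eq yK by (simp add: field_simps)
    finally show "v K $ i = (mat N K (\<lambda>(i,j). v j $ i) *\<^sub>v a) $ i" by simp
  qed (use v in simp)
  moreover have "a \<in> carrier_vec K" by (simp add: a_def)
  ultimately show thesis using that Kk by blast
qed

definition companion_mat :: "'a::{zero,one} vec \<Rightarrow> 'a mat" where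
  "companion_mat a = mat (dim_vec a) (dim_vec a)
     (\<lambda>(i,j). if Suc j < dim_vec a then (if i = Suc j then 1 else 0) else a $ i)"

lemma mult_krylov_mat_companion:
  fixes A :: "'a::field mat"
  assumes A: "A \<in> carrier_mat N N" and w: "w \<in> carrier_vec N" and a: "a \<in> carrier_vec d"
    and last: "A ^\<^sub>m d *\<^sub>v w = krylov_mat A w d *\<^sub>v a"
  shows "A * krylov_mat A w d = krylov_mat A w d * companion_mat a"
proof -
  define v where "v = (\<lambda>j. A ^\<^sub>m j *\<^sub>v w)"
  have vSuc: "v (Suc j) = A *\<^sub>v v j" for j
    unfolding v_def pow_mat_Suc_left[OF A] using A w by (simp add: assoc_mult_mat_vec[of _ N N _ N])
  have V: "krylov_mat A w d = mat N d (\<lambda>(i,j). v j $ i)" using A by (simp add: krylov_mat_def v_def)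
  have C: "companion_mat a \<in> carrier_mat d d" using a by (simp add: companion_mat_def)
  show ?thesis
  proof (rule eq_matI)
    fix i j assume "i < dim_row (krylov_mat A w d * companion_mat a)"
      and "j < dim_col (krylov_mat A w d * companion_mat a)"
    then have i: "i < N" and j: "j < d" using C by (auto simp: V)
    have "(A * krylov_mat A w d) $$ (i,j) = row A i \<bullet> v j"
      using i j A col_krylov_mat[OF A w j] by (simp add: V v_def)
    also have "\<dots> = v (Suc j) $ i" using vSuc i A by simp
    also have "\<dots> = (\<Sum>l<d. v l $ i * companion_mat a $$ (l,j))"
    proof (cases "Suc j < d")
      case True
      have "(\<Sum>l<d. v l $ i * companion_mat a $$ (l,j)) = (\<Sum>l<d. if l = Suc j then v l $ i else 0)"
        by (rule sum.cong) (use True j a in \<open>auto simp: companion_mat_def\<close>)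
      then show ?thesis using True by simp
    next
      case False
      then have jd: "Suc j = d" using j by simp
      have "(\<Sum>l<d. v l $ i * companion_mat a $$ (l,j)) = (\<Sum>l<d. v l $ i * a $ l)"
        by (rule sum.cong) (use False j a in \<open>auto simp: companion_mat_def\<close>)
      also have "\<dots> = (krylov_mat A w d *\<^sub>v a) $ i"
        using i a by (simp add: V scalar_prod_def lessThan_atLeast0 mult.commute)
      finally show ?thesis using last jd by (simp add: v_def)
    qed
    also have "\<dots> = (krylov_mat A w d * companion_mat a) $$ (i,j)"
      using i j C by (simp add: V scalar_prod_def lessThan_atLeast0)
    finally show "(A * krylov_mat A w d) $$ (i,j) = (krylov_mat A w d * companion_mat a) $$ (i,j)" .
  qed (use A C in \<open>auto simp: krylov_mat_def\<close>)
qed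

lemma krylov_mat_invariant:
  fixes A :: "'a::field mat"
  assumes A: "A \<in> carrier_mat N N" and w: "w \<in> carrier_vec N" "w \<noteq> 0\<^sub>v N"
  obtains d C where "0 < d" "d \<le> N" "C \<in> carrier_mat d d"
    "A * krylov_mat A w d = krylov_mat A w d * C"
    "\<forall>y \<in> carrier_vec d. krylov_mat A w d *\<^sub>v y = 0\<^sub>v N \<longrightarrow> y = 0\<^sub>v d"
proof -
  define v where "v = (\<lambda>j. A ^\<^sub>m j *\<^sub>v w)"
  have vc: "v j \<in> carrier_vec N" for j
    unfolding v_def using A w by (metis mult_mat_vec_carrier pow_carrier_mat)
  define V where "V = (\<lambda>k. krylov_mat A w k)"
  have V: "V k = mat N k (\<lambda>(i,j). v j $ i)" for k using A by (simp add: V_def krylov_mat_def v_def)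
  have Vc: "V k \<in> carrier_mat N k" for k by (simp add: V)
  define P where "P = (\<lambda>k. \<exists>a \<in> carrier_vec k. v k = V k *\<^sub>v a)"
  have dep: "\<exists>K<k. P K" if y: "y \<in> carrier_vec k" "y \<noteq> 0\<^sub>v k" "V k *\<^sub>v y = 0\<^sub>v N" for y k
  proof -
    obtain K a where "K < k" "a \<in> carrier_vec K" "v K = mat N K (\<lambda>(i,j). v j $ i) *\<^sub>v a"
      by (rule nonzero_kernel_obtain_col_comb_previous[OF vc y[unfolded V]])
    then show ?thesis by (auto simp: P_def V)
  qed
  \<comment> \<open>The N+1 vectors v 0, ..., v N are dependent; d is the first index where v d depends on its
    predecessors, so v 0, ..., v (d-1) span an A-invariant subspace.\<close>
  obtain c where "c \<in> carrier_vec (Suc N)" "c \<noteq> 0\<^sub>v (Suc N)" "V (Suc N) *\<^sub>v c = 0\<^sub>v N"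
    using wide_mat_kernel_nontrivial[OF Vc, of "Suc N"] by auto
  then obtain K where K: "K < Suc N" "P K" using dep by blast
  define d where "d = (LEAST k. P k)"
  have Pd: "P d" unfolding d_def using K(2) by (rule LeastI)
  have dN: "d \<le> N" using Least_le[of P K] K unfolding d_def by simp
  have d0: "0 < d"
  proof (rule ccontr)
    assume "\<not> 0 < d"
    then have "v 0 = 0\<^sub>v N" using Pd by (auto simp: P_def V vec_eq_iff scalar_prod_def)
    then show False using w A by (simp add: v_def)
  qed
  have indep: "\<forall>y \<in> carrier_vec d. V d *\<^sub>v y = 0\<^sub>v N \<longrightarrow> y = 0\<^sub>v d"
    using dep not_less_Least unfolding d_def by blast
  obtain a where a: "a \<in> carrier_vec d" "v d = V d *\<^sub>v a" using Pd unfolding P_def by auto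
  have "A * V d = V d * companion_mat a"
    using mult_krylov_mat_companion[OF A w(1) a(1)] a(2) by (simp add: V_def v_def)
  moreover have "companion_mat a \<in> carrier_mat d d" using a(1) by (simp add: companion_mat_def)
  ultimately show thesis using that d0 dN indep by (simp add: V_def)
qed

lemma invariant_subspace_obtain_eigenvector:
  fixes A :: "complex mat"
  assumes A: "A \<in> carrier_mat N N" and V: "V \<in> carrier_mat N d" and C: "C \<in> carrier_mat d d"
    and d: "0 < d" and AV: "A * V = V * C"
    and inj: "\<forall>y \<in> carrier_vec d. V *\<^sub>v y = 0\<^sub>v N \<longrightarrow> y = 0\<^sub>v d"
  obtains \<mu> y where "y \<in> carrier_vec d" "eigenvector A (V *\<^sub>v y) \<mu>"
proof -
  obtain \<mu> where "eigenvalue C \<mu>" using spectrum_non_empty[OF C d] by (auto simp: spectrum_def)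
  then obtain y where y: "y \<in> carrier_vec d" "y \<noteq> 0\<^sub>v d" "C *\<^sub>v y = \<mu> \<cdot>\<^sub>v y"
    using C by (auto simp: eigenvalue_def eigenvector_def)
  have "A *\<^sub>v (V *\<^sub>v y) = V *\<^sub>v (C *\<^sub>v y)"
    using A V C y by (simp add: AV assoc_mult_mat_vec[symmetric])
  also have "\<dots> = \<mu> \<cdot>\<^sub>v (V *\<^sub>v y)" using V y by (simp add: mult_mat_vec)
  finally have "eigenvector A (V *\<^sub>v y) \<mu>"
    using A V y inj by (auto simp: eigenvector_def)
  with y(1) show thesis by (rule that)
qed

lemma hautus_unobservable_iff:
  fixes A :: "complex mat"
  assumes A: "A \<in> carrier_mat N N" and C: "C \<in> carrier_mat p N"
  shows "has_unobservable_vec A C \<longleftrightarrow> has_unobservable_eigvec A C"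
proof
  assume "has_unobservable_vec A C"
  then obtain w where w: "w \<in> carrier_vec N" "w \<noteq> 0\<^sub>v N"
    and Cw: "\<forall>k<N. C *\<^sub>v (A ^\<^sub>m k *\<^sub>v w) = 0\<^sub>v p"
    using A C by (auto simp: has_unobservable_vec_def)
  obtain d K where d: "0 < d" "d \<le> N" and K: "K \<in> carrier_mat d d"
    and inv: "A * krylov_mat A w d = krylov_mat A w d * K"
    and inj: "\<forall>y \<in> carrier_vec d. krylov_mat A w d *\<^sub>v y = 0\<^sub>v N \<longrightarrow> y = 0\<^sub>v d"
    by (rule krylov_mat_invariant[OF A w])
  have V: "krylov_mat A w d \<in> carrier_mat N d" using A by (simp add: krylov_mat_def)
  obtain \<mu> y where y: "y \<in> carrier_vec d" and ev: "eigenvector A (krylov_mat A w d *\<^sub>v y) \<mu>"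
    by (rule invariant_subspace_obtain_eigenvector[OF A V K d(1) inv inj])
  have "C * krylov_mat A w d = 0\<^sub>m p d"
  proof (rule eq_matI)
    fix r j assume "r < dim_row (0\<^sub>m p d :: complex mat)" "j < dim_col (0\<^sub>m p d :: complex mat)"
    then have r: "r < p" and j: "j < d" by auto
    have "(C * krylov_mat A w d) $$ (r,j) = (C *\<^sub>v (A ^\<^sub>m j *\<^sub>v w)) $ r"
      using r j C V col_krylov_mat[OF A w(1) j] by simp
    then show "(C * krylov_mat A w d) $$ (r,j) = 0\<^sub>m p d $$ (r,j)" using Cw j d(2) r by simp
  qed (use C V in auto)
  then have "C *\<^sub>v (krylov_mat A w d *\<^sub>v y) = 0\<^sub>v p"
    using C V y by (simp add: assoc_mult_mat_vec[symmetric])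
  then show "has_unobservable_eigvec A C" using ev C by (auto simp: has_unobservable_eigvec_def)
next
  assume "has_unobservable_eigvec A C"
  then obtain \<mu> u where ev: "eigenvector A u \<mu>" and Cu: "C *\<^sub>v u = 0\<^sub>v p"
    using C by (auto simp: has_unobservable_eigvec_def)
  have "C *\<^sub>v (A ^\<^sub>m k *\<^sub>v u) = 0\<^sub>v p" for k
    using eigenvector_pow[OF A ev, of k] ev A C Cu
    by (simp add: eigenvector_def mult_mat_vec) (auto simp: vec_eq_iff)
  then show "has_unobservable_vec A C" using ev A C by (auto simp: has_unobservable_vec_def eigenvector_def)
qed

lemma of_real_mult_mat_vec_Re_Im:
  fixes X :: "real mat" and w :: "complex vec"
  assumes "X \<in> carrier_mat r N" and "w \<in> carrier_vec N"
  shows "map_vec Re (map_mat complex_of_real X *\<^sub>v w) = X *\<^sub>v map_vec Re w"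
    and "map_vec Im (map_mat complex_of_real X *\<^sub>v w) = X *\<^sub>v map_vec Im w"
  using assms by (auto simp: vec_eq_iff scalar_prod_def Re_sum Im_sum)

lemma has_unobservable_vec_of_real_iff:
  fixes A C :: "real mat"
  assumes A: "A \<in> carrier_mat N N" and C: "C \<in> carrier_mat p N"
  shows "has_unobservable_vec (map_mat complex_of_real A) (map_mat complex_of_real C)
     \<longleftrightarrow> has_unobservable_vec A C"
proof
  let ?c = "map_mat complex_of_real"
  have hom: "?c C *\<^sub>v (?c A ^\<^sub>m k *\<^sub>v w) = ?c (C * A ^\<^sub>m k) *\<^sub>v w" if "w \<in> carrier_vec N" for k w
    using A C that
    by (simp add: of_real_hom.mat_hom_pow[OF A] of_real_hom.mat_hom_mult[OF C pow_carrier_mat[OF A]]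
        assoc_mult_mat_vec[of _ p N _ N])
  assume "has_unobservable_vec (?c A) (?c C)"
  then obtain w where w: "w \<in> carrier_vec N" "w \<noteq> 0\<^sub>v N"
    and Cw: "\<forall>k<N. ?c (C * A ^\<^sub>m k) *\<^sub>v w = 0\<^sub>v p"
    using A C hom by (auto simp: has_unobservable_vec_def)
  \<comment> \<open>Both the real and the imaginary part of w are unobservable, and one of them is nonzero.\<close>
  have CA: "C *\<^sub>v (A ^\<^sub>m k *\<^sub>v map_vec f w) = 0\<^sub>v p" if "k < N" "f = Re \<or> f = Im" for k f
  proof -
    have "C *\<^sub>v (A ^\<^sub>m k *\<^sub>v map_vec f w) = (C * A ^\<^sub>m k) *\<^sub>v map_vec f w"
      using A C w by (simp add: assoc_mult_mat_vec[of _ p N _ N])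
    also have "\<dots> = map_vec f (?c (C * A ^\<^sub>m k) *\<^sub>v w)"
      using that of_real_mult_mat_vec_Re_Im[OF mult_carrier_mat[OF C pow_carrier_mat[OF A]] w(1)]
      by auto
    finally show ?thesis using Cw that by (auto simp: vec_eq_iff)
  qed
  have "map_vec Re w \<noteq> 0\<^sub>v N \<or> map_vec Im w \<noteq> 0\<^sub>v N"
    using w by (auto simp: vec_eq_iff complex_eq_iff)
  then show "has_unobservable_vec A C"
    using CA w A C unfolding has_unobservable_vec_def by (metis carrier_matD(1) map_carrier_vec)
next
  let ?c = "map_mat complex_of_real"
  assume "has_unobservable_vec A C"
  then obtain w where w: "w \<in> carrier_vec N" "w \<noteq> 0\<^sub>v N"
    and Cw: "\<forall>k<N. C *\<^sub>v (A ^\<^sub>m k *\<^sub>v w) = 0\<^sub>v p"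
    using A C by (auto simp: has_unobservable_vec_def)
  have "?c C *\<^sub>v (?c A ^\<^sub>m k *\<^sub>v map_vec complex_of_real w)
      = map_vec complex_of_real (C *\<^sub>v (A ^\<^sub>m k *\<^sub>v w))" for k
    using A C w
    by (simp add: of_real_hom.mat_hom_pow[OF A, symmetric]
        of_real_hom.mult_mat_vec_hom[OF pow_carrier_mat[OF A] w(1), symmetric]
        of_real_hom.mult_mat_vec_hom[OF C mult_mat_vec_carrier[OF pow_carrier_mat[OF A] w(1)], symmetric])
  moreover have "map_vec complex_of_real w \<noteq> 0\<^sub>v N" using w by (auto simp: vec_eq_iff)
  ultimately show "has_unobservable_vec (?c A) (?c C)"
    using Cw w A C unfolding has_unobservable_vec_def
    by (auto intro!: bexI[of _ "map_vec complex_of_real w"])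
qed

text \<open>The rank condition rank [\<mu>^2 M + G, B] = dim_row M fails for some \<mu>, as witnessed by a
  nonzero vector in the left kernel.\<close>
definition pencil_rank_defect :: "'a::field mat \<Rightarrow> 'a mat \<Rightarrow> 'a mat \<Rightarrow> bool" where
  "pencil_rank_defect M G B \<longleftrightarrow> (\<exists>\<mu> y. y \<in> carrier_vec (dim_row M) \<and> y \<noteq> 0\<^sub>v (dim_row M) \<and>
     (\<mu>\<^sup>2 \<cdot>\<^sub>m M + G)\<^sup>T *\<^sub>v y = 0\<^sub>v (dim_row M) \<and> B\<^sup>T *\<^sub>v y = 0\<^sub>v (dim_col B))"

lemma transpose_pencil_mult_vec:
  assumes "M \<in> carrier_mat N N" and "G \<in> carrier_mat N N" and "y \<in> carrier_vec N"
  shows "(\<mu>\<^sup>2 \<cdot>\<^sub>m M + G)\<^sup>T *\<^sub>v y = \<mu>\<^sup>2 \<cdot>\<^sub>v (M\<^sup>T *\<^sub>v y) + G\<^sup>T *\<^sub>v y"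
proof -
  have "(\<mu>\<^sup>2 \<cdot>\<^sub>m M + G)\<^sup>T = \<mu>\<^sup>2 \<cdot>\<^sub>m M\<^sup>T + G\<^sup>T"
    using transpose_add[of "\<mu>\<^sup>2 \<cdot>\<^sub>m M" N N G] assms by (simp add: transpose_smult_mat)
  then show ?thesis
    using assms by (simp add: add_mult_distrib_mat_vec[of _ N N] smult_mat_mult_vec)
qed

lemma first_order_unobservable_eigvec_iff:
  fixes F H :: "'a::field mat"
  assumes F: "F \<in> carrier_mat N N" and H: "H \<in> carrier_mat N p"
  shows "has_unobservable_eigvec (four_block_mat (0\<^sub>m N N) (1\<^sub>m N) (- F) (0\<^sub>m N N))\<^sup>T
            (vcat (0\<^sub>m N p) H)\<^sup>T
     \<longleftrightarrow> (\<exists>\<mu> w. eigenvector F\<^sup>T w (- \<mu>\<^sup>2) \<and> H\<^sup>T *\<^sub>v w = 0\<^sub>v p)"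
    (is "has_unobservable_eigvec ?A ?C \<longleftrightarrow> _")
proof -
  have A: "?A = four_block_mat (0\<^sub>m N N) (- F)\<^sup>T (1\<^sub>m N) (0\<^sub>m N N)"
    using F by (subst transpose_four_block_mat) auto
  have Ac: "?A \<in> carrier_mat (N + N) (N + N)" using F by (simp add: A)
  have Cc: "?C \<in> carrier_mat p (N + N)" using vcat_carrier[of "0\<^sub>m N p" N p H N] H by simp
  have A_mult: "?A *\<^sub>v (w1 @\<^sub>v w2) = (- (F\<^sup>T *\<^sub>v w2)) @\<^sub>v w1"
    if "w1 \<in> carrier_vec N" "w2 \<in> carrier_vec N" for w1 w2
    unfolding A using F that
    by (subst four_block_mat_mult_vec[of _ N N _ N _ N]) (auto simp: transpose_uminus uminus_mult_mat_vec)
  have C_mult: "?C *\<^sub>v (w1 @\<^sub>v w2) = H\<^sup>T *\<^sub>v w2"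
    if "w1 \<in> carrier_vec N" "w2 \<in> carrier_vec N" for w1 w2
    using transpose_vcat_mult_append[of "0\<^sub>m N p" N p H N w1 w2] H that by simp
  show ?thesis
  proof
    assume "has_unobservable_eigvec ?A ?C"
    then obtain \<mu> u where u: "u \<in> carrier_vec (N + N)" "u \<noteq> 0\<^sub>v (N + N)" "?A *\<^sub>v u = \<mu> \<cdot>\<^sub>v u"
      and Cu: "?C *\<^sub>v u = 0\<^sub>v p"
      using Ac Cc by (auto simp: has_unobservable_eigvec_def eigenvector_def)
    define w1 where "w1 = vec_first u N"
    define w2 where "w2 = vec_last u N"
    have w: "w1 \<in> carrier_vec N" "w2 \<in> carrier_vec N" and uw: "u = w1 @\<^sub>v w2"
      using u(1) by (auto simp: w1_def w2_def)
    have "(- (F\<^sup>T *\<^sub>v w2)) @\<^sub>v w1 = (\<mu> \<cdot>\<^sub>v w1) @\<^sub>v (\<mu> \<cdot>\<^sub>v w2)"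
      using u(3) A_mult[OF w] by (simp add: uw smult_append_vec)
    then have e1: "- (F\<^sup>T *\<^sub>v w2) = \<mu> \<cdot>\<^sub>v w1" and e2: "w1 = \<mu> \<cdot>\<^sub>v w2"
      using append_vec_eq[of "- (F\<^sup>T *\<^sub>v w2)" N "\<mu> \<cdot>\<^sub>v w1"] F w by auto
    have "w2 \<noteq> 0\<^sub>v N"
    proof
      assume "w2 = 0\<^sub>v N"
      then have "u = 0\<^sub>v (N + N)" using uw e2 by (auto simp: vec_eq_iff)
      with u(2) show False by simp
    qed
    moreover have "F\<^sup>T *\<^sub>v w2 = - (\<mu> \<cdot>\<^sub>v (\<mu> \<cdot>\<^sub>v w2))"
      using e1 e2 by (metis uminus_uminus_vec)
    then have "F\<^sup>T *\<^sub>v w2 = (- \<mu>\<^sup>2) \<cdot>\<^sub>v w2"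
      using w by (auto simp: vec_eq_iff power2_eq_square)
    ultimately have "eigenvector F\<^sup>T w2 (- \<mu>\<^sup>2)" using F w by (simp add: eigenvector_def)
    moreover have "H\<^sup>T *\<^sub>v w2 = 0\<^sub>v p" using Cu C_mult[OF w] uw by simp
    ultimately show "\<exists>\<mu> w. eigenvector F\<^sup>T w (- \<mu>\<^sup>2) \<and> H\<^sup>T *\<^sub>v w = 0\<^sub>v p" by blast
  next
    assume "\<exists>\<mu> w. eigenvector F\<^sup>T w (- \<mu>\<^sup>2) \<and> H\<^sup>T *\<^sub>v w = 0\<^sub>v p"
    then obtain \<mu> w where w: "w \<in> carrier_vec N" "w \<noteq> 0\<^sub>v N" "F\<^sup>T *\<^sub>v w = (- \<mu>\<^sup>2) \<cdot>\<^sub>v w"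
      and Hw: "H\<^sup>T *\<^sub>v w = 0\<^sub>v p"
      using F by (auto simp: eigenvector_def)
    define u where "u = (\<mu> \<cdot>\<^sub>v w) @\<^sub>v w"
    have "?A *\<^sub>v u = \<mu> \<cdot>\<^sub>v u"
      using A_mult[of "\<mu> \<cdot>\<^sub>v w" w] w
      by (simp add: u_def smult_append_vec) (auto simp: vec_eq_iff power2_eq_square)
    moreover have "u \<in> carrier_vec (N + N)" "u \<noteq> 0\<^sub>v (N + N)"
      using w by (auto simp: u_def vec_eq_iff)
    moreover have "?C *\<^sub>v u = 0\<^sub>v p" using C_mult[of "\<mu> \<cdot>\<^sub>v w" w] w Hw by (simp add: u_def)
    ultimately show "has_unobservable_eigvec ?A ?C"
      using Ac Cc by (auto simp: has_unobservable_eigvec_def eigenvector_def)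
  qed
qed

lemma pencil_rank_defect_iff_eigvec:
  fixes M Mi G B :: "'a::field mat"
  assumes M: "M \<in> carrier_mat N N" and Mi: "Mi \<in> carrier_mat N N"
    and G: "G \<in> carrier_mat N N" and B: "B \<in> carrier_mat N p"
    and MiM: "Mi * M = 1\<^sub>m N" and MMi: "M * Mi = 1\<^sub>m N"
  shows "pencil_rank_defect M G B
     \<longleftrightarrow> (\<exists>\<mu> w. eigenvector (Mi * G)\<^sup>T w (- \<mu>\<^sup>2) \<and> (Mi * B)\<^sup>T *\<^sub>v w = 0\<^sub>v p)"
proof -
  have "Mi\<^sup>T * M\<^sup>T = 1\<^sub>m N" using transpose_mult[OF M Mi] MMi by simp
  then have inv1: "Mi\<^sup>T *\<^sub>v (M\<^sup>T *\<^sub>v y) = y" if "y \<in> carrier_vec N" for y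
    using that M Mi by (simp add: assoc_mult_mat_vec[symmetric, of _ N N _ N])
  have "M\<^sup>T * Mi\<^sup>T = 1\<^sub>m N" using transpose_mult[OF Mi M] MiM by simp
  then have inv2: "M\<^sup>T *\<^sub>v (Mi\<^sup>T *\<^sub>v w) = w" if "w \<in> carrier_vec N" for w
    using that M Mi by (simp add: assoc_mult_mat_vec[symmetric, of _ N N _ N])
  have G': "(Mi * G)\<^sup>T *\<^sub>v w = G\<^sup>T *\<^sub>v (Mi\<^sup>T *\<^sub>v w)" if "w \<in> carrier_vec N" for w
    using that Mi G by (simp add: transpose_mult[OF Mi G] assoc_mult_mat_vec[of _ N N _ N])
  have B': "(Mi * B)\<^sup>T *\<^sub>v w = B\<^sup>T *\<^sub>v (Mi\<^sup>T *\<^sub>v w)" if "w \<in> carrier_vec N" for w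
    using that Mi B by (simp add: transpose_mult[OF Mi B] assoc_mult_mat_vec[of _ p N _ N])
  have pencil: "(\<mu>\<^sup>2 \<cdot>\<^sub>m M + G)\<^sup>T *\<^sub>v y = 0\<^sub>v N \<longleftrightarrow> G\<^sup>T *\<^sub>v y = (- \<mu>\<^sup>2) \<cdot>\<^sub>v (M\<^sup>T *\<^sub>v y)"
    if "y \<in> carrier_vec N" for \<mu> y
    unfolding transpose_pencil_mult_vec[OF M G that]
    using M G that by (auto simp: vec_eq_iff eq_neg_iff_add_eq_0 add.commute)
  show ?thesis
  proof
    assume "pencil_rank_defect M G B"
    then obtain \<mu> y where y: "y \<in> carrier_vec N" "y \<noteq> 0\<^sub>v N"
      "G\<^sup>T *\<^sub>v y = (- \<mu>\<^sup>2) \<cdot>\<^sub>v (M\<^sup>T *\<^sub>v y)" "B\<^sup>T *\<^sub>v y = 0\<^sub>v p"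
      using M B pencil by (auto simp: pencil_rank_defect_def)
    define w where "w = M\<^sup>T *\<^sub>v y"
    have w: "w \<in> carrier_vec N" and yw: "Mi\<^sup>T *\<^sub>v w = y"
      using M y(1) inv1 by (auto simp: w_def)
    have "w \<noteq> 0\<^sub>v N" using yw y(2) Mi by auto
    then have "eigenvector (Mi * G)\<^sup>T w (- \<mu>\<^sup>2)"
      using w Mi G G' yw y(3) by (simp add: eigenvector_def w_def)
    moreover have "(Mi * B)\<^sup>T *\<^sub>v w = 0\<^sub>v p" using B' w yw y(4) by simp
    ultimately show "\<exists>\<mu> w. eigenvector (Mi * G)\<^sup>T w (- \<mu>\<^sup>2) \<and> (Mi * B)\<^sup>T *\<^sub>v w = 0\<^sub>v p" by blast
  next
    assume "\<exists>\<mu> w. eigenvector (Mi * G)\<^sup>T w (- \<mu>\<^sup>2) \<and> (Mi * B)\<^sup>T *\<^sub>v w = 0\<^sub>v p"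
    then obtain \<mu> w where w: "w \<in> carrier_vec N" "w \<noteq> 0\<^sub>v N"
      "(Mi * G)\<^sup>T *\<^sub>v w = (- \<mu>\<^sup>2) \<cdot>\<^sub>v w" and Bw: "(Mi * B)\<^sup>T *\<^sub>v w = 0\<^sub>v p"
      using Mi G by (auto simp: eigenvector_def)
    define y where "y = Mi\<^sup>T *\<^sub>v w"
    have y: "y \<in> carrier_vec N" and wy: "M\<^sup>T *\<^sub>v y = w"
      using Mi w(1) inv2 by (auto simp: y_def)
    have "y \<noteq> 0\<^sub>v N" using wy w(2) M by auto
    moreover have "G\<^sup>T *\<^sub>v y = (- \<mu>\<^sup>2) \<cdot>\<^sub>v (M\<^sup>T *\<^sub>v y)" using G' w(1,3) wy by (simp add: y_def)
    moreover have "B\<^sup>T *\<^sub>v y = 0\<^sub>v p" using B' w(1) Bw by (simp add: y_def)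
    ultimately show "pencil_rank_defect M G B"
      using y M B pencil by (auto simp: pencil_rank_defect_def)
  qed
qed

lemma so_controllable_iff_no_pencil_rank_defect:
  fixes M G B :: "real mat"
  assumes M: "M \<in> carrier_mat N N" and G: "G \<in> carrier_mat N N" and B: "B \<in> carrier_mat N p"
    and inj: "\<forall>v \<in> carrier_vec N. M *\<^sub>v v = 0\<^sub>v N \<longrightarrow> v = 0\<^sub>v N"
  shows "so_controllable M G B \<longleftrightarrow>
    \<not> pencil_rank_defect (map_mat complex_of_real M) (map_mat complex_of_real G) (map_mat complex_of_real B)"
proof -
  let ?c = "map_mat complex_of_real"
  define Mi where "Mi = minv M"
  have Mi: "Mi \<in> carrier_mat N N" and MMi: "M * Mi = 1\<^sub>m N" and MiM: "Mi * M = 1\<^sub>m N"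
    using minv_inverse[OF M inj] unfolding Mi_def by auto
  define A where "A = four_block_mat (0\<^sub>m N N) (1\<^sub>m N) (- (Mi * G)) (0\<^sub>m N N)"
  define C where "C = vcat (0\<^sub>m N p) (Mi * B)"
  have Ac: "A \<in> carrier_mat (N + N) (N + N)" using Mi G by (simp add: A_def)
  have Cc: "C \<in> carrier_mat (N + N) p" using Mi B vcat_carrier[of "0\<^sub>m N p" N p "Mi * B" N] by (simp add: C_def)
  have uminus: "?c (- X) = - ?c X" for X by (rule eq_matI) auto
  have cA: "?c A\<^sup>T = (four_block_mat (0\<^sub>m N N) (1\<^sub>m N) (- (?c Mi * ?c G)) (0\<^sub>m N N))\<^sup>T"
    unfolding map_mat_transpose[symmetric] A_def using Mi G
    by (simp add: map_four_block_mat[of _ N N _ N _ N] map_mat_of_real_zero_mat of_real_hom.mat_hom_one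
        of_real_hom.mat_hom_mult[OF Mi G] uminus)
  have cC: "?c C\<^sup>T = (vcat (0\<^sub>m N p) (?c Mi * ?c B))\<^sup>T"
    unfolding map_mat_transpose[symmetric] C_def using Mi B
    by (subst map_vcat) (auto simp: map_mat_of_real_zero_mat of_real_hom.mat_hom_mult[OF Mi B])
  have cMi: "?c Mi * ?c M = 1\<^sub>m N" "?c M * ?c Mi = 1\<^sub>m N"
    using of_real_hom.mat_hom_mult[OF Mi M] of_real_hom.mat_hom_mult[OF M Mi] MiM MMi
    by (metis of_real_hom.mat_hom_one)+
  have "so_controllable M G B \<longleftrightarrow> controllable A C"
    using M B by (simp add: so_controllable_def A_def C_def Mi_def)
  also have "\<dots> \<longleftrightarrow> \<not> has_unobservable_vec A\<^sup>T C\<^sup>T"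
    by (rule controllable_iff_no_unobservable_vec[OF Ac Cc])
  also have "\<dots> \<longleftrightarrow> \<not> has_unobservable_vec (?c A\<^sup>T) (?c C\<^sup>T)"
    using has_unobservable_vec_of_real_iff[of "A\<^sup>T" "N + N" "C\<^sup>T" p] Ac Cc by simp
  also have "\<dots> \<longleftrightarrow> \<not> has_unobservable_eigvec (?c A\<^sup>T) (?c C\<^sup>T)"
    using hautus_unobservable_iff[of "?c A\<^sup>T" "N + N" "?c C\<^sup>T" p] Ac Cc by simp
  also have "\<dots> \<longleftrightarrow> \<not> (\<exists>\<mu> w. eigenvector (?c Mi * ?c G)\<^sup>T w (- \<mu>\<^sup>2) \<and> (?c Mi * ?c B)\<^sup>T *\<^sub>v w = 0\<^sub>v p)"
    unfolding cA cC using Mi G B by (subst first_order_unobservable_eigvec_iff) auto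
  also have "\<dots> \<longleftrightarrow> \<not> pencil_rank_defect (?c M) (?c G) (?c B)"
    using pencil_rank_defect_iff_eigvec[of "?c M" N "?c Mi" "?c G" "?c B" p] M Mi G B cMi by simp
  finally show ?thesis .
qed

lemma no_pencil_rank_defect_iff_mrank:
  fixes M G B :: "'a::field mat"
  assumes M: "M \<in> carrier_mat N N" and G: "G \<in> carrier_mat N N" and B: "B \<in> carrier_mat N p"
  shows "\<not> pencil_rank_defect M G B \<longleftrightarrow> (\<forall>z. mrank (hcat (z\<^sup>2 \<cdot>\<^sub>m M + G) B) = N)"
proof -
  have H: "hcat (z\<^sup>2 \<cdot>\<^sub>m M + G) B \<in> carrier_mat N (N + p)" for z using M G B by (simp add: hcat_def)
  have "mrank (hcat (z\<^sup>2 \<cdot>\<^sub>m M + G) B) = N \<longleftrightarrow> (\<forall>y \<in> carrier_vec N.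
      (z\<^sup>2 \<cdot>\<^sub>m M + G)\<^sup>T *\<^sub>v y = 0\<^sub>v N \<and> B\<^sup>T *\<^sub>v y = 0\<^sub>v p \<longrightarrow> y = 0\<^sub>v N)" for z
    unfolding mrank_eq_dim_row_iff[OF H] left_kernel_trivial_def carrier_matD[OF H]
    using transpose_hcat_mult_vec_eq_0_iff[of "z\<^sup>2 \<cdot>\<^sub>m M + G" N N B p] M G B by auto
  then show ?thesis using M B by (auto simp: pencil_rank_defect_def)
qed

lemma pos_def_kernel_trivial:
  assumes "pos_def A" and "A \<in> carrier_mat N N"
  shows "\<forall>v \<in> carrier_vec N. A *\<^sub>v v = 0\<^sub>v N \<longrightarrow> v = 0\<^sub>v N"
  using assms by (auto simp: pos_def_def)

lemma pos_def_four_block_kernel_trivial_lower_right: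
  assumes pd: "pos_def (four_block_mat A B C D)"
    and A: "A \<in> carrier_mat k k" and B: "B \<in> carrier_mat k q"
    and C: "C \<in> carrier_mat q k" and D: "D \<in> carrier_mat q q"
  shows "\<forall>v \<in> carrier_vec q. D *\<^sub>v v = 0\<^sub>v q \<longrightarrow> v = 0\<^sub>v q"
proof (intro ballI impI)
  fix v :: "real vec" assume v: "v \<in> carrier_vec q" and Dv: "D *\<^sub>v v = 0\<^sub>v q"
  define x where "x = 0\<^sub>v k @\<^sub>v v"
  have x: "x \<in> carrier_vec (k + q)" using v by (simp add: x_def)
  have "four_block_mat A B C D *\<^sub>v x = (B *\<^sub>v v) @\<^sub>v 0\<^sub>v q"
    unfolding x_def using A B C D v Dv by (subst four_block_mat_mult_vec[OF A B C D]) auto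
  then have "x \<bullet> (four_block_mat A B C D *\<^sub>v x) = 0"
    using B v by (simp add: x_def scalar_prod_append[of _ k _ q])
  then have "x = 0\<^sub>v (k + q)" using pd x A D by (auto simp: pos_def_def)
  then have "0\<^sub>v k @\<^sub>v v = 0\<^sub>v k @\<^sub>v 0\<^sub>v q" by (auto simp: x_def vec_eq_iff)
  then show "v = 0\<^sub>v q" using append_vec_eq[of "0\<^sub>v k" k "0\<^sub>v k"] by auto
qed

lemma diagonal_transpose_kernel_trivial:
  fixes A :: "'a::field mat"
  assumes A: "A \<in> carrier_mat n n"
    and offdiag: "\<And>i j. i < n \<Longrightarrow> j < n \<Longrightarrow> i \<noteq> j \<Longrightarrow> A $$ (i,j) = 0"
    and diag: "\<And>i. i < n \<Longrightarrow> A $$ (i,i) \<noteq> 0"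
  shows "\<forall>y \<in> carrier_vec n. A\<^sup>T *\<^sub>v y = 0\<^sub>v n \<longrightarrow> y = 0\<^sub>v n"
proof (intro ballI impI eq_vecI)
  fix y :: "'a vec" and i assume y: "y \<in> carrier_vec n" and Ay: "A\<^sup>T *\<^sub>v y = 0\<^sub>v n"
    and "i < dim_vec (0\<^sub>v n :: 'a vec)"
  then have i: "i < n" by simp
  have "(A\<^sup>T *\<^sub>v y) $ i = (\<Sum>j = 0..<n. A $$ (j,i) * y $ j)"
    using A y i by (simp add: scalar_prod_def)
  also have "\<dots> = (\<Sum>j = 0..<n. if j = i then A $$ (i,i) * y $ i else 0)"
    by (rule sum.cong) (use offdiag i in auto)
  finally have "A $$ (i,i) * y $ i = 0" using Ay i by simp
  then show "y $ i = 0\<^sub>v n $ i" using diag i by simp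
qed (simp)

lemma transpose_vcat_one_zero_mult_eq_0:
  fixes y :: "'a::field vec"
  assumes y: "y \<in> carrier_vec (k + q)" and By: "(vcat (1\<^sub>m k) (0\<^sub>m q k))\<^sup>T *\<^sub>v y = 0\<^sub>v k"
  shows "y = 0\<^sub>v k @\<^sub>v vec_last y q"
proof -
  have y_split: "y = vec_first y k @\<^sub>v vec_last y q" using y by simp
  have "(vcat (1\<^sub>m k) (0\<^sub>m q k))\<^sup>T *\<^sub>v y = vec_first y k"
    by (subst y_split) (simp add: transpose_vcat_mult_append[of _ k k _ q])
  then have "vec_first y k = 0\<^sub>v k" using By by simp
  with y_split show ?thesis by metis
qed

lemma transpose_block_pencil_mult_zero_append:
  fixes Mxx Mxq Mqx Mqq Gqq :: "'a::field mat"
  assumes "Mxx \<in> carrier_mat k k" and "Mxq \<in> carrier_mat k q" and Mqx: "Mqx \<in> carrier_mat q k"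
    and "Mqq \<in> carrier_mat q q" and "Gqq \<in> carrier_mat q q" and y: "y \<in> carrier_vec q"
  shows "(\<mu>\<^sup>2 \<cdot>\<^sub>m four_block_mat Mxx Mxq Mqx Mqq + four_block_mat (0\<^sub>m k k) (0\<^sub>m k q) (0\<^sub>m q k) Gqq)\<^sup>T
           *\<^sub>v (0\<^sub>v k @\<^sub>v y)
       = (\<mu>\<^sup>2 \<cdot>\<^sub>v (Mqx\<^sup>T *\<^sub>v y)) @\<^sub>v ((\<mu>\<^sup>2 \<cdot>\<^sub>m Mqq + Gqq)\<^sup>T *\<^sub>v y)"
proof -
  have "\<mu>\<^sup>2 \<cdot>\<^sub>m four_block_mat Mxx Mxq Mqx Mqq + four_block_mat (0\<^sub>m k k) (0\<^sub>m k q) (0\<^sub>m q k) Gqq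
      = four_block_mat (\<mu>\<^sup>2 \<cdot>\<^sub>m Mxx) (\<mu>\<^sup>2 \<cdot>\<^sub>m Mxq) (\<mu>\<^sup>2 \<cdot>\<^sub>m Mqx) (\<mu>\<^sup>2 \<cdot>\<^sub>m Mqq + Gqq)"
    using assms by (intro eq_matI) auto
  then show ?thesis using assms
    by (simp add: transpose_four_block_mult_zero_append[of _ k _ q] transpose_smult_mat smult_mat_mult_vec)
qed

lemma pencil_rank_defect_reduce_block:
  fixes Mxx Mxq Mqx Mqq Gqq :: "'a::field mat"
  assumes Mxx: "Mxx \<in> carrier_mat k k" and Mxq: "Mxq \<in> carrier_mat k q"
    and Mqx: "Mqx \<in> carrier_mat q k" and Mqq: "Mqq \<in> carrier_mat q q" and Gqq: "Gqq \<in> carrier_mat q q"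
    and Gqq_inj: "\<forall>y \<in> carrier_vec q. Gqq\<^sup>T *\<^sub>v y = 0\<^sub>v q \<longrightarrow> y = 0\<^sub>v q"
  shows "pencil_rank_defect (four_block_mat Mxx Mxq Mqx Mqq)
           (four_block_mat (0\<^sub>m k k) (0\<^sub>m k q) (0\<^sub>m q k) Gqq) (vcat (1\<^sub>m k) (0\<^sub>m q k))
     \<longleftrightarrow> pencil_rank_defect Mqq Gqq Mqx"
    (is "pencil_rank_defect ?M ?G ?B \<longleftrightarrow> _")
proof -
  note pencil_mult = transpose_block_pencil_mult_zero_append[OF Mxx Mxq Mqx Mqq Gqq]
  have dims: "dim_row ?M = k + q" "dim_col ?B = k" "dim_row Mqq = q" "dim_col Mqx = k"
    using Mxx Mqq Mqx by (auto simp: vcat_def)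
  have zero: "(0\<^sub>v (k + q) :: 'a vec) = 0\<^sub>v k @\<^sub>v 0\<^sub>v q" by (rule eq_vecI) auto
  show ?thesis
  proof
    assume "pencil_rank_defect ?M ?G ?B"
    then obtain \<mu> y where y: "y \<in> carrier_vec (k + q)" "y \<noteq> 0\<^sub>v (k + q)"
      "(\<mu>\<^sup>2 \<cdot>\<^sub>m ?M + ?G)\<^sup>T *\<^sub>v y = 0\<^sub>v (k + q)" "?B\<^sup>T *\<^sub>v y = 0\<^sub>v k"
      unfolding pencil_rank_defect_def dims by auto
    define yq where "yq = vec_last y q"
    have yq: "yq \<in> carrier_vec q" by (simp add: yq_def)
    have y_eq: "y = 0\<^sub>v k @\<^sub>v yq"
      unfolding yq_def by (rule transpose_vcat_one_zero_mult_eq_0[OF y(1,4)])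
    have "yq \<noteq> 0\<^sub>v q"
    proof
      assume "yq = 0\<^sub>v q"
      then have "y = 0\<^sub>v (k + q)" unfolding y_eq zero by simp
      with y(2) show False by simp
    qed
    have c: "\<mu>\<^sup>2 \<cdot>\<^sub>v (Mqx\<^sup>T *\<^sub>v yq) \<in> carrier_vec k" using Mqx yq by simp
    have "(\<mu>\<^sup>2 \<cdot>\<^sub>v (Mqx\<^sup>T *\<^sub>v yq)) @\<^sub>v ((\<mu>\<^sup>2 \<cdot>\<^sub>m Mqq + Gqq)\<^sup>T *\<^sub>v yq) = 0\<^sub>v k @\<^sub>v 0\<^sub>v q"
      using y(3) unfolding y_eq pencil_mult[OF yq] zero .
    then have e1: "\<mu>\<^sup>2 \<cdot>\<^sub>v (Mqx\<^sup>T *\<^sub>v yq) = 0\<^sub>v k"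
      and e2: "(\<mu>\<^sup>2 \<cdot>\<^sub>m Mqq + Gqq)\<^sup>T *\<^sub>v yq = 0\<^sub>v q"
      unfolding append_vec_eq[OF c zero_carrier_vec] by auto
    \<comment> \<open>\<mu> = 0 would put yq into the kernel of the transposed gravity matrix.\<close>
    have "\<mu> \<noteq> 0"
    proof
      assume "\<mu> = 0"
      moreover have "0 \<cdot>\<^sub>m Mqq + Gqq = Gqq" using Mqq Gqq by (intro eq_matI) auto
      ultimately have "Gqq\<^sup>T *\<^sub>v yq = 0\<^sub>v q" using e2 by simp
      then show False using Gqq_inj yq \<open>yq \<noteq> 0\<^sub>v q\<close> by blast
    qed
    then have "Mqx\<^sup>T *\<^sub>v yq = 0\<^sub>v k" using e1 Mqx yq by (auto simp: vec_eq_iff)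
    then show "pencil_rank_defect Mqq Gqq Mqx"
      unfolding pencil_rank_defect_def dims using yq \<open>yq \<noteq> 0\<^sub>v q\<close> e2 by blast
  next
    assume "pencil_rank_defect Mqq Gqq Mqx"
    then obtain \<mu> yq where yq: "yq \<in> carrier_vec q" "yq \<noteq> 0\<^sub>v q"
      "(\<mu>\<^sup>2 \<cdot>\<^sub>m Mqq + Gqq)\<^sup>T *\<^sub>v yq = 0\<^sub>v q" "Mqx\<^sup>T *\<^sub>v yq = 0\<^sub>v k"
      unfolding pencil_rank_defect_def dims by auto
    have "\<mu>\<^sup>2 \<cdot>\<^sub>v 0\<^sub>v k = 0\<^sub>v k" by (rule eq_vecI) auto
    then have "(\<mu>\<^sup>2 \<cdot>\<^sub>m ?M + ?G)\<^sup>T *\<^sub>v (0\<^sub>v k @\<^sub>v yq) = 0\<^sub>v (k + q)"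
      unfolding pencil_mult[OF yq(1)] yq(3,4) zero by simp
    moreover have "?B\<^sup>T *\<^sub>v (0\<^sub>v k @\<^sub>v yq) = 0\<^sub>v k"
      using transpose_vcat_mult_append[of "1\<^sub>m k" k k "0\<^sub>m q k" q "0\<^sub>v k" yq] yq(1) by simp
    moreover have "0\<^sub>v k @\<^sub>v yq \<noteq> 0\<^sub>v (k + q)" using yq(1,2) by (auto simp: vec_eq_iff)
    ultimately show "pencil_rank_defect ?M ?G ?B"
      unfolding pencil_rank_defect_def dims using yq(1) by (metis append_carrier_vec zero_carrier_vec)
  qed
qed

lemma chain_cart_carrier:
  fixes n :: nat and m g :: real and mm l s :: "nat \<Rightarrow> real"
  shows "Mxx n m mm \<in> carrier_mat 2 2" "Mxq n mm l s \<in> carrier_mat 2 (2 * n)"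
    "Mqx n mm l s \<in> carrier_mat (2 * n) 2" "Mqq n mm l s \<in> carrier_mat (2 * n) (2 * n)"
    "Gqq n mm l s g \<in> carrier_mat (2 * n) (2 * n)"
    "Mlin n m mm l s \<in> carrier_mat (2 + 2 * n) (2 + 2 * n)"
    "Glin n mm l s g \<in> carrier_mat (2 + 2 * n) (2 + 2 * n)" "Blin n \<in> carrier_mat (2 + 2 * n) 2"
  by (auto simp: Mxx_def Mxq_def Mqx_def Mqq_def Gqq_def Mlin_def Glin_def Blin_def vcat_def)

lemma Gqq_diagonal_nonzero:
  assumes "g > 0" and "\<forall>i\<in>{1..n}. mm i > 0" and "\<forall>i\<in>{1..n}. l i > 0"
    and "\<forall>i\<in>{1..n}. s i = 1 \<or> s i = -1" and r: "r < 2 * n"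
  shows "Gqq n mm l s g $$ (r, r) \<noteq> 0"
proof -
  define i where "i = r div 2 + 1"
  have i: "i \<in> {1..n}" unfolding i_def using r by auto
  have "msum n mm i > 0" unfolding msum_def using i assms(2) by (intro sum_pos) auto
  moreover have "s i \<noteq> 0" using i assms(4) by force
  moreover have "l i > 0" using i assms(3) by blast
  moreover have "Gqq n mm l s g $$ (r, r) = s i * msum n mm i * g * l i"
    unfolding Gqq_def i_def using r by simp
  ultimately show ?thesis using assms(1) by simp
qed

lemma pencil_rank_defect_chain_cart_iff:
  assumes "g > 0" and "\<forall>i\<in>{1..n}. mm i > 0" and "\<forall>i\<in>{1..n}. l i > 0"
    and "\<forall>i\<in>{1..n}. s i = 1 \<or> s i = -1"
  shows "pencil_rank_defect (map_mat complex_of_real (Mlin n m mm l s))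
           (map_mat complex_of_real (Glin n mm l s g)) (map_mat complex_of_real (Blin n))
     \<longleftrightarrow> pencil_rank_defect (map_mat complex_of_real (Mqq n mm l s))
           (map_mat complex_of_real (Gqq n mm l s g)) (map_mat complex_of_real (Mqx n mm l s))"
proof -
  let ?c = "map_mat complex_of_real"
  note carrier = chain_cart_carrier
  have M: "?c (Mlin n m mm l s)
      = four_block_mat (?c (Mxx n m mm)) (?c (Mxq n mm l s)) (?c (Mqx n mm l s)) (?c (Mqq n mm l s))"
    unfolding Mlin_def by (rule map_four_block_mat[OF carrier(1-4)])
  have G: "?c (Glin n mm l s g)
      = four_block_mat (0\<^sub>m 2 2) (0\<^sub>m 2 (2 * n)) (0\<^sub>m (2 * n) 2) (?c (Gqq n mm l s g))"
    unfolding Glin_def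
    by (subst map_four_block_mat[OF zero_carrier_mat zero_carrier_mat zero_carrier_mat carrier(5)])
      (simp add: map_mat_of_real_zero_mat)
  have B: "?c (Blin n) = vcat (1\<^sub>m 2) (0\<^sub>m (2 * n) 2)"
    unfolding Blin_def by (subst map_vcat) (auto simp: map_mat_of_real_zero_mat of_real_hom.mat_hom_one)
  have "\<forall>y \<in> carrier_vec (2 * n). (?c (Gqq n mm l s g))\<^sup>T *\<^sub>v y = 0\<^sub>v (2 * n) \<longrightarrow> y = 0\<^sub>v (2 * n)"
    using carrier Gqq_diagonal_nonzero[OF assms]
    by (intro diagonal_transpose_kernel_trivial) (auto simp: Gqq_def)
  then show ?thesis
    unfolding M G B using carrier by (intro pencil_rank_defect_reduce_block[where k = 2]) auto
qed

theorem proposition3: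
  fixes n :: nat and m g :: real and mm l s :: "nat \<Rightarrow> real"
  assumes "n \<ge> 1" and "m > 0" and "g > 0"
    and "\<forall>i\<in>{1..n}. mm i > 0" and "\<forall>i\<in>{1..n}. l i > 0"
    and "\<forall>i\<in>{1..n}. s i = 1 \<or> s i = -1"
    and "pos_def (Mlin n m mm l s)"
  shows "(so_controllable (Mlin n m mm l s) (Glin n mm l s g) (Blin n)
            \<longleftrightarrow> so_controllable (Mqq n mm l s) (Gqq n mm l s g) (Mqx n mm l s))
       \<and> (so_controllable (Mlin n m mm l s) (Glin n mm l s g) (Blin n)
            \<longleftrightarrow> (\<forall>z::complex.
                   mrank (hcat ((z\<^sup>2) \<cdot>\<^sub>m map_mat complex_of_real (Mqq n mm l s)
                                  + map_mat complex_of_real (Gqq n mm l s g))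
                               (map_mat complex_of_real (Mqx n mm l s))) = 2 * n))"
proof -
  let ?c = "map_mat complex_of_real"
  let ?sub_defect = "pencil_rank_defect (?c (Mqq n mm l s)) (?c (Gqq n mm l s g)) (?c (Mqx n mm l s))"
  note carrier = chain_cart_carrier
  have "so_controllable (Mlin n m mm l s) (Glin n mm l s g) (Blin n) \<longleftrightarrow>
      \<not> pencil_rank_defect (?c (Mlin n m mm l s)) (?c (Glin n mm l s g)) (?c (Blin n))"
    using carrier pos_def_kernel_trivial[OF assms(7) carrier(6)]
    by (intro so_controllable_iff_no_pencil_rank_defect[where p = 2]) auto
  also have "\<dots> \<longleftrightarrow> \<not> ?sub_defect"
    using pencil_rank_defect_chain_cart_iff[OF assms(3-6)] by simp
  finally have "so_controllable (Mlin n m mm l s) (Glin n mm l s g) (Blin n) \<longleftrightarrow> \<not> ?sub_defect" .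
  moreover have "so_controllable (Mqq n mm l s) (Gqq n mm l s g) (Mqx n mm l s) \<longleftrightarrow> \<not> ?sub_defect"
    using carrier pos_def_four_block_kernel_trivial_lower_right[OF assms(7)[unfolded Mlin_def] carrier(1-4)]
    by (intro so_controllable_iff_no_pencil_rank_defect[where p = 2]) auto
  moreover have "\<not> ?sub_defect \<longleftrightarrow>
      (\<forall>z. mrank (hcat (z\<^sup>2 \<cdot>\<^sub>m ?c (Mqq n mm l s) + ?c (Gqq n mm l s g)) (?c (Mqx n mm l s))) = 2 * n)"
    using carrier by (intro no_pencil_rank_defect_iff_mrank[where p = 2]) auto
  ultimately show ?thesis by blast
qed

end
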